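(* Fix an integer $d\geq 2$. Let $\gamma_d$ be the epicycloid \[ \gamma_d=\left\{ \frac{e^{id\theta}-de^{i\theta}}{d+1} : \theta\in[0,2\pi]\right\}\subset\overline{\mathbb{D}}. \] Then the relative boundary of $\widetilde{\mathcal{E}_d}$ in $\overline{\mathbb{D}}$ is the epicycloid $\gamma_d$.
   Context: $\mathbb{D}$ denotes the open unit disk. For $w\in\mathbb{D}$ let $B_w(z)=\left(\frac{z-w}{1-\overline{w}z}\right)^d$, a unicritical Blaschke product of degree $d$. By the Denjoy–Wolff theorem, a finite Blaschke product $B$ of degree at least $2$ has a unique point $z_0\in\overline{\mathbb{D}}$ (its Denjoy–Wolff point) such that $B^n(z)\to z_0$ for every $z\in\mathbb{D}$. $B$ is called elliptic if $z_0\in\mathbb{D}$; hyperbolic if $z_0\in\partial\mathbb{D}$ and $B'(z_0)<1$; parabolic if $z_0\in\partial\mathbb{D}$ and $B'(z_0)=1$. Let $S_d=\{w\in\mathbb{D}:\arg(w)\in[0,\tfrac{2\pi}{d-1})\}$, let $\mathcal{E}_d=\{w\in S_d: B_w \text{ is elliptic}\}$, and let $\widetilde{\mathcal{E}_d}=\bigcup_{j=0}^{d-2}R_j(\mathcal{E}_d)\subset\mathbb{D}$, where $R_j$ is the rotation of the plane about $0$ through angle $2\pi j/(d-1)$. *)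

theory Defs
  imports "HOL-Analysis.Analysis"
begin

definition blaschke :: "nat \<Rightarrow> complex \<Rightarrow> complex \<Rightarrow> complex" where
  "blaschke d w z = ((z - w) / (1 - cnj w * z)) ^ d"

text \<open>B is elliptic: its Denjoy--Wolff point lies in the open unit disk, i.e. there is
  z0 in the open disk with B^n(z) tending to z0 for every z in the open disk.\<close>
definition elliptic :: "(complex \<Rightarrow> complex) \<Rightarrow> bool" where
  "elliptic B \<longleftrightarrow> (\<exists>z0\<in>ball 0 1. \<forall>z\<in>ball 0 1. (\<lambda>n. (B ^^ n) z) \<longlonglongrightarrow> z0)"

definition sector :: "nat \<Rightarrow> complex set" where
  "sector d = {w \<in> ball 0 1. \<exists>t. 0 \<le> t \<and> t < 2 * pi / (real d - 1) \<and>
                                  w = complex_of_real (norm w) * cis t}"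

definition ellip_set :: "nat \<Rightarrow> complex set" where
  "ellip_set d = {w \<in> sector d. elliptic (blaschke d w)}"

definition ellip_tilde :: "nat \<Rightarrow> complex set" where
  "ellip_tilde d = (\<Union>j\<in>{0..d-2}. (\<lambda>w. cis (2 * pi * real j / (real d - 1)) * w) ` ellip_set d)"

definition epicycloid :: "nat \<Rightarrow> complex set" where
  "epicycloid d = (\<lambda>\<theta>. (cis (real d * \<theta>) - of_nat d * cis \<theta>) / (of_nat d + 1)) ` {0..2*pi}"

end

(*
  A point w of the disk lies in the rotated elliptic set iff B_w has a fixed point in the open
  disk: a holomorphic self-map of the disk that is not injective (B_w has a critical point at w)
  and has an interior fixed point attracts every orbit to it, by Schwarz's lemma applied to its
  conjugate fixing 0; in particular that fixed point is unique. Writing the fixed point as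
  z = (u + w) / (1 + cnj w * u), the fixed-point equation w - cnj w * u^(d+1) = u^d - u is
  real-linear in w, so these w form the image of the disk under an explicit continuous map,
  which is injective by uniqueness of fixed points. By invariance of domain this image is open,
  and its frontier relative to the closed disk is the image of the unit circle, i.e. the
  epicycloid, since the map sends e^(i t) to (e^(i d t) - d e^(i t)) / (d + 1). Rotations by
  (d-1)-th roots of unity preserve the set, so its rotated pieces in the sector S_d fill it out.
*)
theory Submission
  imports Defs "HOL-Complex_Analysis.Complex_Analysis"
begin

section \<open>Blaschke products and their dynamics\<close>

lemma Moebius_function_inverse [simp]:
  assumes "norm w < 1" "norm z < 1"
  shows "Moebius_function 0 (-w) (Moebius_function 0 w z) = z"
    and "Moebius_function 0 w (Moebius_function 0 (-w) z) = z"
  using Moebius_function_compose[of w "-w" z] Moebius_function_compose[of "-w" w z] assms by auto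

lemma Moebius_function_maps_ball:
  "norm w < 1 \<Longrightarrow> Moebius_function 0 w ` ball 0 1 \<subseteq> ball 0 1"
  using Moebius_function_norm_lt_1 by auto

lemma blaschke_eq_Moebius_power: "blaschke d w = (\<lambda>z. Moebius_function 0 w z ^ d)"
  by (simp add: blaschke_def Moebius_function_simple fun_eq_iff)

lemma holomorphic_on_blaschke:
  "norm w < 1 \<Longrightarrow> blaschke d w holomorphic_on ball 0 1"
  unfolding blaschke_eq_Moebius_power by (intro holomorphic_intros Moebius_function_holomorphic)

lemma blaschke_maps_ball:
  assumes "norm w < 1" "d \<ge> 1"
  shows "blaschke d w ` ball 0 1 \<subseteq> ball 0 1"
  using Moebius_function_norm_lt_1[OF assms(1)] assms(2)
  by (auto simp: blaschke_eq_Moebius_power norm_power power_less_one_iff)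

lemma blaschke_critical_point:
  assumes "norm w < 1" "d \<ge> 2"
  shows "deriv (blaschke d w) w = 0"
proof -
  obtain M' where "(Moebius_function 0 w has_field_derivative M') (at w)"
    using Moebius_function_holomorphic[OF assms(1), of 0] assms(1)
    by (meson centre_in_ball holomorphic_on_imp_differentiable_at open_ball zero_less_one
        mem_ball_0 field_differentiable_def)
  hence "(blaschke d w has_field_derivative
           of_nat d * (M' * Moebius_function 0 w w ^ (d - Suc 0))) (at w)"
    unfolding blaschke_eq_Moebius_power by (rule DERIV_power)
  moreover have "Moebius_function 0 w w ^ (d - Suc 0) = 0"
    using assms(2) by (simp add: Moebius_function_eq_zero)
  ultimately show ?thesis by (simp add: DERIV_imp_deriv)
qed

text \<open>Injective holomorphic maps have no critical points, but \<open>w\<close> is one of \<open>B\<^sub>w\<close>.\<close>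
lemma blaschke_not_inj_on:
  assumes "norm w < 1" "d \<ge> 2"
  shows "\<not> inj_on (blaschke d w) (ball 0 1)"
  using holomorphic_injective_imp_regular[OF holomorphic_on_blaschke[OF assms(1)] open_ball]
    blaschke_critical_point[OF assms] assms(1) by fastforce

text \<open>The norms of the iterates decrease to some \<open>L\<close>; a cluster point \<open>p\<close> of the iterates then has
  \<open>norm (f p) = norm p = L\<close>, which forces \<open>p = 0\<close>.\<close>
lemma iterates_tendsto_0_if_norm_decreasing:
  fixes f :: "'a::{real_normed_vector, heine_borel} \<Rightarrow> 'a"
  assumes cont: "continuous_on (ball 0 r) f" and f0: "f 0 = 0"
    and less: "\<And>y. norm y < r \<Longrightarrow> y \<noteq> 0 \<Longrightarrow> norm (f y) < norm y"
    and y: "norm y < r"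
  shows "(\<lambda>n. (f ^^ n) y) \<longlonglongrightarrow> 0"
proof -
  define x where "x n = (f ^^ n) y" for n
  have le: "norm (f z) \<le> norm z" if "norm z < r" for z
    using less[OF that] f0 by (cases "z = 0") auto
  have x_Suc_le: "norm (x (Suc n)) \<le> norm (x n)" if "norm (x n) < r" for n
    using le[OF that] by (simp add: x_def)
  have x_bound: "norm (x n) \<le> norm y" for n
  proof (induction n)
    case (Suc n)
    thus ?case using x_Suc_le[of n] y by linarith
  qed (simp add: x_def)
  have x_le: "norm (x (Suc n)) \<le> norm (x n)" for n
    using x_Suc_le[of n] x_bound[of n] y by linarith
  have "decseq (\<lambda>n. norm (x n))" using x_le by (rule decseq_SucI)
  then obtain L where L: "(\<lambda>n. norm (x n)) \<longlonglongrightarrow> L"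
    using decseq_convergent[of _ 0] by (metis norm_ge_zero)
  have "\<forall>n. x n \<in> cball 0 (norm y)" using x_bound by simp
  then obtain p \<sigma> where p: "p \<in> cball 0 (norm y)" and \<sigma>: "strict_mono \<sigma>" and xp: "(x \<circ> \<sigma>) \<longlonglongrightarrow> p"
    by (rule seq_compactE[OF compact_imp_seq_compact[OF compact_cball]])
  have "norm p < r" using p y by simp
  hence "isCont f p" using cont by (simp add: continuous_on_eq_continuous_at)
  from isCont_tendsto_compose[OF this xp]
  have "(\<lambda>n. norm (f (x (\<sigma> n)))) \<longlonglongrightarrow> norm (f p)" by (intro tendsto_norm) (simp add: o_def)
  moreover have "(\<lambda>n. norm (f (x (\<sigma> n)))) \<longlonglongrightarrow> L"
  proof -
    have "strict_mono (Suc \<circ> \<sigma>)" using \<sigma> by (simp add: strict_mono_def)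
    from LIMSEQ_subseq_LIMSEQ[OF L this] show ?thesis by (simp add: x_def o_def)
  qed
  moreover have "(\<lambda>n. norm (x (\<sigma> n))) \<longlonglongrightarrow> norm p" and "(\<lambda>n. norm (x (\<sigma> n))) \<longlonglongrightarrow> L"
    using tendsto_norm[OF xp] LIMSEQ_subseq_LIMSEQ[OF L \<sigma>] by (simp_all add: o_def)
  ultimately have "norm (f p) = norm p" and Lp: "L = norm p"
    by (metis LIMSEQ_unique)+
  hence "p = 0" using less[OF \<open>norm p < r\<close>] by force
  thus ?thesis using L Lp by (simp add: x_def tendsto_norm_zero_iff)
qed

lemma holomorphic_on_Moebius_conj:
  fixes B :: "complex \<Rightarrow> complex"
  assumes holB: "B holomorphic_on ball 0 1" and maps: "B ` ball 0 1 \<subseteq> ball 0 1"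
    and z0: "norm z0 < 1"
  shows "(\<lambda>y. Moebius_function 0 z0 (B (Moebius_function 0 (-z0) y))) holomorphic_on ball 0 1"
proof -
  have nz0: "norm (-z0) < 1" using z0 by simp
  have "(B \<circ> Moebius_function 0 (-z0)) holomorphic_on ball 0 1"
    by (rule holomorphic_on_compose_gen[OF Moebius_function_holomorphic[OF nz0] holB
          Moebius_function_maps_ball[OF nz0]])
  moreover have "(B \<circ> Moebius_function 0 (-z0)) ` ball 0 1 \<subseteq> ball 0 1"
    using maps Moebius_function_maps_ball[OF nz0] by (auto simp: image_subset_iff)
  ultimately show ?thesis
    using holomorphic_on_compose_gen[OF _ Moebius_function_holomorphic[OF z0]] by (simp add: o_def)
qed

text \<open>Equality in Schwarz's lemma would make the conjugate a rotation, and hence \<open>B\<close> injective.\<close>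
lemma norm_Moebius_conj_less:
  fixes B :: "complex \<Rightarrow> complex"
  assumes holB: "B holomorphic_on ball 0 1" and maps: "B ` ball 0 1 \<subseteq> ball 0 1"
    and not_inj: "\<not> inj_on B (ball 0 1)" and z0: "norm z0 < 1" "B z0 = z0"
    and y: "norm y < 1" "y \<noteq> 0"
  shows "norm (Moebius_function 0 z0 (B (Moebius_function 0 (-z0) y))) < norm y"
proof -
  define F where "F y = Moebius_function 0 z0 (B (Moebius_function 0 (-z0) y))" for y
  have nz0: "norm (-z0) < 1" using z0 by simp
  have holF: "F holomorphic_on ball 0 1"
    unfolding F_def using holomorphic_on_Moebius_conj[OF holB maps z0(1)] .
  have F0: "F 0 = 0"
    using z0 by (simp add: F_def Moebius_function_of_zero Moebius_function_eq_zero)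
  have mapsF: "norm (F z) < 1" if "norm z < 1" for z
    using that maps Moebius_function_norm_lt_1[OF nz0] Moebius_function_norm_lt_1[OF z0(1)]
    by (auto simp: F_def image_subset_iff)
  have "norm (F y) < norm y"
  proof (rule ccontr)
    assume "\<not> norm (F y) < norm y"
    hence "norm (F y) = norm y" using Schwarz_Lemma(1)[OF holF F0 mapsF y(1)] by simp
    then obtain \<alpha> where \<alpha>: "\<And>z. norm z < 1 \<Longrightarrow> F z = \<alpha> * z" "norm \<alpha> = 1"
      using Schwarz_Lemma(3)[OF holF F0 mapsF y(1)] y by blast
    have "inj_on B (ball 0 1)"
    proof (rule inj_onI)
      fix z1 z2 assume z: "z1 \<in> ball 0 1" "z2 \<in> ball 0 1" and "B z1 = B z2"
      hence "F (Moebius_function 0 z0 z1) = F (Moebius_function 0 z0 z2)"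
        using z0 by (simp add: F_def)
      hence "Moebius_function 0 z0 z1 = Moebius_function 0 z0 z2"
        using \<alpha> z Moebius_function_norm_lt_1[OF z0(1)] by auto
      thus "z1 = z2" using Moebius_function_inverse(1)[OF z0(1)] z by (metis mem_ball_0)
    qed
    with not_inj show False by contradiction
  qed
  thus ?thesis by (simp add: F_def)
qed

lemma iterates_tendsto_interior_fixed_point:
  fixes B :: "complex \<Rightarrow> complex"
  assumes holB: "B holomorphic_on ball 0 1" and maps: "B ` ball 0 1 \<subseteq> ball 0 1"
    and not_inj: "\<not> inj_on B (ball 0 1)" and z0: "norm z0 < 1" "B z0 = z0"
    and z: "norm z < 1"
  shows "(\<lambda>n. (B ^^ n) z) \<longlonglongrightarrow> z0"
proof -
  define F where "F y = Moebius_function 0 z0 (B (Moebius_function 0 (-z0) y))" for y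
  have nz0: "norm (-z0) < 1" using z0 by simp
  have "(B ^^ n) z \<in> ball 0 1" for n
    by (induction n) (use z maps in \<open>auto simp: image_subset_iff\<close>)
  hence iter_in: "norm ((B ^^ n) z) < 1" for n by simp
  have iter_F: "(F ^^ n) (Moebius_function 0 z0 z) = Moebius_function 0 z0 ((B ^^ n) z)" for n
    by (induction n) (use z0 iter_in in \<open>simp_all add: F_def\<close>)
  have "F 0 = 0"
    using z0 by (simp add: F_def Moebius_function_of_zero Moebius_function_eq_zero)
  moreover have "continuous_on (ball 0 1) F" unfolding F_def
    by (intro holomorphic_on_imp_continuous_on holomorphic_on_Moebius_conj holB maps z0)
  ultimately have "(\<lambda>n. (F ^^ n) (Moebius_function 0 z0 z)) \<longlonglongrightarrow> 0"
    using norm_Moebius_conj_less[OF assms(1-5)] Moebius_function_norm_lt_1[OF z0(1) z]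
    by (intro iterates_tendsto_0_if_norm_decreasing) (auto simp: F_def)
  moreover have "isCont (Moebius_function 0 (-z0)) 0"
    using holomorphic_on_imp_continuous_on[OF Moebius_function_holomorphic[OF nz0]]
    by (simp add: continuous_on_eq_continuous_at)
  ultimately have "(\<lambda>n. Moebius_function 0 (-z0) ((F ^^ n) (Moebius_function 0 z0 z)))
      \<longlonglongrightarrow> Moebius_function 0 (-z0) 0"
    by (rule isCont_tendsto_compose[rotated])
  thus ?thesis using iter_F iter_in z0 by (simp add: Moebius_function_of_zero)
qed

lemma interior_fixed_point_unique:
  fixes B :: "complex \<Rightarrow> complex"
  assumes "B holomorphic_on ball 0 1" "B ` ball 0 1 \<subseteq> ball 0 1" "\<not> inj_on B (ball 0 1)"
    and "norm z0 < 1" "B z0 = z0" and "norm z1 < 1" "B z1 = z1"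
  shows "z1 = z0"
proof -
  have "(B ^^ n) z1 = z1" for n by (induction n) (use assms(7) in auto)
  hence "(\<lambda>n. (B ^^ n) z1) \<longlonglongrightarrow> z1" by simp
  thus ?thesis using iterates_tendsto_interior_fixed_point[OF assms(1-6)] by (rule LIMSEQ_unique)
qed

lemma elliptic_iff_interior_fixed_point:
  fixes B :: "complex \<Rightarrow> complex"
  assumes holB: "B holomorphic_on ball 0 1" and maps: "B ` ball 0 1 \<subseteq> ball 0 1"
    and not_inj: "\<not> inj_on B (ball 0 1)"
  shows "elliptic B \<longleftrightarrow> (\<exists>z0\<in>ball 0 1. B z0 = z0)"
proof
  assume "elliptic B"
  then obtain z0 where z0: "z0 \<in> ball 0 1" "(\<lambda>n. (B ^^ n) 0) \<longlonglongrightarrow> z0"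
    unfolding elliptic_def by force
  have "isCont B z0"
    using holomorphic_on_imp_continuous_on[OF holB] z0(1) by (simp add: continuous_on_eq_continuous_at)
  hence "(\<lambda>n. B ((B ^^ n) 0)) \<longlonglongrightarrow> B z0" using z0(2) by (rule isCont_tendsto_compose)
  moreover have "(\<lambda>n. B ((B ^^ n) 0)) \<longlonglongrightarrow> z0" using LIMSEQ_Suc[OF z0(2)] by simp
  ultimately show "\<exists>z0\<in>ball 0 1. B z0 = z0" using z0(1) LIMSEQ_unique by blast
next
  assume "\<exists>z0\<in>ball 0 1. B z0 = z0"
  then obtain z0 where "norm z0 < 1" "B z0 = z0" by auto
  thus "elliptic B"
    using iterates_tendsto_interior_fixed_point[OF assms] unfolding elliptic_def
    by (intro bexI[of _ z0] ballI) auto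
qed

section \<open>The elliptic parameters as the image of a disk map\<close>

lemma conj_linear_eq_iff:
  fixes v w c :: complex
  assumes "norm v < 1"
  shows "w - cnj w * v = c \<longleftrightarrow> w = (c + v * cnj c) / (1 - v * cnj v)"
proof -
  have "norm v ^ 2 < 1" using assms by (simp add: abs_square_less_1)
  hence nz: "1 - v * cnj v \<noteq> 0"
    unfolding complex_norm_square[symmetric] by (metis of_real_eq_1_iff right_minus_eq less_irrefl)
  show ?thesis
  proof
    assume h: "w - cnj w * v = c"
    hence "cnj c = cnj w - w * cnj v" by auto
    hence "c + v * cnj c = w * (1 - v * cnj v)" unfolding h[symmetric] by (simp add: algebra_simps)
    thus "w = (c + v * cnj c) / (1 - v * cnj v)" using nz by (simp add: field_simps)
  next
    assume "w = (c + v * cnj c) / (1 - v * cnj v)"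
    hence h1: "w * (1 - v * cnj v) = c + v * cnj c" using nz by (simp add: field_simps)
    hence "cnj (w * (1 - v * cnj v)) = cnj (c + v * cnj c)" by simp
    hence h2: "cnj w * (1 - v * cnj v) = cnj c + cnj v * c" by (simp add: algebra_simps)
    have "(w - cnj w * v) * (1 - v * cnj v) = w * (1 - v * cnj v) - v * (cnj w * (1 - v * cnj v))"
      by (simp add: algebra_simps)
    also have "\<dots> = c * (1 - v * cnj v)" unfolding h1 h2 by (simp add: algebra_simps)
    finally show "w - cnj w * v = c" using nz by simp
  qed
qed

lemma sum_powers_ge_1: "0 \<le> (t::real) \<Longrightarrow> 1 \<le> (\<Sum>i<Suc n. t ^ i)"
  unfolding sum.lessThan_Suc_shift by (simp add: sum_nonneg)

text \<open>In the coordinate \<open>u = (z - w) / (1 - cnj w * z)\<close>, in which \<open>B\<^sub>w z = u ^ d\<close>, the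
  fixed-point equation \<open>B\<^sub>w z = z\<close> reads \<open>w - cnj w * u ^ (d + 1) = u ^ d - u\<close>.
  It is real-linear in \<open>w\<close>, and \<open>elliptic_param d u\<close> is its unique solution.\<close>
definition elliptic_param :: "nat \<Rightarrow> complex \<Rightarrow> complex" where
  "elliptic_param d u =
     (u ^ d - u * of_real (\<Sum>i<d. (norm u ^ 2) ^ i)) / of_real (\<Sum>i<Suc d. (norm u ^ 2) ^ i)"

lemma elliptic_param_eq_quotient:
  assumes "norm u < 1"
  shows "((u ^ d - u) + u ^ Suc d * cnj (u ^ d - u)) / (1 - u ^ Suc d * cnj (u ^ Suc d))
           = elliptic_param d u"
proof -
  define S where "S = u * cnj u"
  have S: "S = of_real (norm u ^ 2)" unfolding S_def by (simp only: complex_norm_square)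
  define P where "P = (\<Sum>i<d. S ^ i)"
  define Q where "Q = (\<Sum>i<Suc d. S ^ i)"
  have PQ: "P = of_real (\<Sum>i<d. (norm u ^ 2) ^ i)" "Q = of_real (\<Sum>i<Suc d. (norm u ^ 2) ^ i)"
    unfolding P_def Q_def S by simp_all
  have "(\<Sum>i<Suc d. (norm u ^ 2) ^ i) \<noteq> 0"
    using sum_powers_ge_1[OF zero_le_power2, of "norm u" d] by linarith
  hence Q0: "Q \<noteq> 0" unfolding PQ(2) of_real_eq_0_iff .
  have "norm u ^ 2 < 1" using assms by (simp add: abs_square_less_1)
  hence S1: "1 - S \<noteq> 0" unfolding S by (metis of_real_eq_1_iff right_minus_eq less_irrefl)
  have num: "(u ^ d - u) + u ^ Suc d * cnj (u ^ d - u) = (1 - S) * (u ^ d - u * P)"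
  proof -
    have "(u ^ d - u) + u ^ Suc d * cnj (u ^ d - u) = u ^ d * (1 - S) - u * (1 - S ^ d)"
      unfolding S_def by (simp add: algebra_simps)
    thus ?thesis unfolding P_def one_diff_power_eq by (simp add: algebra_simps)
  qed
  have den: "1 - u ^ Suc d * cnj (u ^ Suc d) = (1 - S) * Q"
    unfolding Q_def one_diff_power_eq[symmetric] S_def
    by (simp only: power_mult_distrib complex_cnj_power)
  show ?thesis unfolding elliptic_param_def num den PQ[symmetric] using S1 Q0 by simp
qed

lemma blaschke_fixed_point_iff:
  assumes w: "norm w < 1" and u: "norm u < 1"
  shows "blaschke d w (Moebius_function 0 (-w) u) = Moebius_function 0 (-w) u
           \<longleftrightarrow> w = elliptic_param d u"
proof -
  have "norm (cnj w * u) < 1"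
    using w u mult_left_le[of "norm u" "norm w"] by (simp add: norm_mult)
  hence D: "1 + cnj w * u \<noteq> 0" by (metis add_eq_0_iff norm_minus_cancel norm_one less_irrefl)
  have "norm (u ^ Suc d) < 1"
    using u unfolding norm_power by (simp only: power_less_one_iff norm_ge_zero) simp
  have "blaschke d w (Moebius_function 0 (-w) u) = u ^ d"
    using w u by (simp add: blaschke_eq_Moebius_power)
  hence "blaschke d w (Moebius_function 0 (-w) u) = Moebius_function 0 (-w) u
          \<longleftrightarrow> u ^ d * (1 + cnj w * u) = u + w"
    using D by (simp add: Moebius_function_simple eq_divide_eq)
  also have "\<dots> \<longleftrightarrow> w - cnj w * u ^ Suc d = u ^ d - u"
    by (auto simp: algebra_simps)
  also have "\<dots> \<longleftrightarrow> w = ((u ^ d - u) + u ^ Suc d * cnj (u ^ d - u)) / (1 - u ^ Suc d * cnj (u ^ Suc d))"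
    by (rule conj_linear_eq_iff) fact
  also have "\<dots> \<longleftrightarrow> w = elliptic_param d u"
    using elliptic_param_eq_quotient[OF u] by simp
  finally show ?thesis .
qed

lemma norm_elliptic_param_less_1:
  assumes "norm u < 1" "d \<ge> 1"
  shows "norm (elliptic_param d u) < 1"
proof -
  define r where "r = norm u"
  define a where "a = r ^ d"
  define P where "P = (\<Sum>i<d. (r\<^sup>2) ^ i)"
  define Q where "Q = (\<Sum>i<Suc d. (r\<^sup>2) ^ i)"
  have r: "0 \<le> r" "r < 1" using assms(1) by (auto simp: r_def)
  have a: "0 \<le> a" "a < 1" using r assms(2) by (auto simp: a_def power_less_one_iff)
  have "P \<ge> 0" unfolding P_def by (intro sum_nonneg) simp
  have "Q \<ge> 1" unfolding Q_def by (rule sum_powers_ge_1) simp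
  have P_eq: "P * (1 - r\<^sup>2) = 1 - a * a" and Q_eq: "Q * (1 - r\<^sup>2) = 1 - a * a * r * r"
    unfolding P_def Q_def a_def
    using one_diff_power_eq[of "r\<^sup>2" d] one_diff_power_eq[of "r\<^sup>2" "Suc d"]
    by (simp_all add: algebra_simps power_mult[symmetric] power2_eq_square)
  have "(Q - (a + r * P)) * (1 - r\<^sup>2) = Q * (1 - r\<^sup>2) - a * (1 - r\<^sup>2) - r * (P * (1 - r\<^sup>2))"
    by (simp add: algebra_simps)
  also have "\<dots> = (1 - r) * (1 - a) * (1 - a * r)"
    unfolding P_eq Q_eq by (simp add: algebra_simps power2_eq_square)
  also have "\<dots> > 0"
    using r a mult_left_le[of r a] by (intro mult_pos_pos) auto
  finally have "(Q - (a + r * P)) * (1 - r\<^sup>2) > 0" .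
  moreover have "1 - r\<^sup>2 > 0" using r by (simp add: abs_square_less_1)
  ultimately have "a + r * P < Q" by (simp add: zero_less_mult_iff)
  moreover have "norm (u ^ d - u * of_real P) \<le> a + r * P"
    using norm_triangle_ineq4[of "u ^ d" "u * of_real P"] \<open>P \<ge> 0\<close>
    by (simp add: a_def r_def norm_power norm_mult)
  moreover have "elliptic_param d u = (u ^ d - u * of_real P) / of_real Q"
    unfolding elliptic_param_def P_def Q_def r_def ..
  ultimately show ?thesis using \<open>Q \<ge> 1\<close> by (simp add: norm_divide divide_less_eq)
qed

lemma continuous_on_elliptic_param: "continuous_on S (elliptic_param d)"
proof -
  have "of_real (\<Sum>i<Suc d. (norm u ^ 2) ^ i) \<noteq> (0::complex)" for u :: complex
    using sum_powers_ge_1[OF zero_le_power2, of "norm u" d] by (simp only: of_real_eq_0_iff)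
  thus ?thesis unfolding elliptic_param_def by (intro continuous_intros) auto
qed

definition fixed_point_locus :: "nat \<Rightarrow> complex set" where
  "fixed_point_locus d = {w \<in> ball 0 1. \<exists>z\<in>ball 0 1. blaschke d w z = z}"

lemma fixed_point_locus_eq_image:
  assumes "d \<ge> 1"
  shows "fixed_point_locus d = elliptic_param d ` ball 0 1"
proof
  show "fixed_point_locus d \<subseteq> elliptic_param d ` ball 0 1"
  proof
    fix w assume "w \<in> fixed_point_locus d"
    then obtain z where w: "norm w < 1" and z: "norm z < 1" "blaschke d w z = z"
      unfolding fixed_point_locus_def by auto
    define u where "u = Moebius_function 0 w z"
    have u: "norm u < 1" using Moebius_function_norm_lt_1 w z by (simp add: u_def)
    have "Moebius_function 0 (-w) u = z" using w z by (simp add: u_def)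
    hence "w = elliptic_param d u" using blaschke_fixed_point_iff[OF w u] z by simp
    thus "w \<in> elliptic_param d ` ball 0 1" using u by auto
  qed
next
  show "elliptic_param d ` ball 0 1 \<subseteq> fixed_point_locus d"
  proof
    fix w assume "w \<in> elliptic_param d ` ball 0 1"
    then obtain u where u: "norm u < 1" and w_eq: "w = elliptic_param d u" by auto
    have w: "norm w < 1" using norm_elliptic_param_less_1[OF u assms] w_eq by simp
    hence "norm (Moebius_function 0 (-w) u) < 1" using Moebius_function_norm_lt_1 u by simp
    moreover have "blaschke d w (Moebius_function 0 (-w) u) = Moebius_function 0 (-w) u"
      using blaschke_fixed_point_iff[OF w u] w_eq by simp
    ultimately show "w \<in> fixed_point_locus d" unfolding fixed_point_locus_def using w by auto
  qed
qed

lemma inj_on_elliptic_param: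
  assumes "d \<ge> 2"
  shows "inj_on (elliptic_param d) (ball 0 1)"
proof
  fix u1 u2 assume u: "u1 \<in> ball 0 1" "u2 \<in> ball 0 1"
    and eq: "elliptic_param d u1 = elliptic_param d u2"
  define w where "w = elliptic_param d u1"
  have w: "norm w < 1" using norm_elliptic_param_less_1 u assms by (simp add: w_def)
  have "norm (-w) < 1" using w by simp
  have fixed: "blaschke d w (Moebius_function 0 (-w) u) = Moebius_function 0 (-w) u"
    if "u \<in> ball 0 1" "elliptic_param d u = w" for u
    using blaschke_fixed_point_iff[OF w, of u d] that by simp
  have in_ball: "norm (Moebius_function 0 (-w) u1) < 1" "norm (Moebius_function 0 (-w) u2) < 1"
    using Moebius_function_norm_lt_1[OF \<open>norm (-w) < 1\<close>] u by auto
  have "Moebius_function 0 (-w) u2 = Moebius_function 0 (-w) u1"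
    by (rule interior_fixed_point_unique[OF holomorphic_on_blaschke[OF w]
          blaschke_maps_ball[OF w] blaschke_not_inj_on[OF w assms] in_ball(1) fixed in_ball(2) fixed])
      (use u eq assms in \<open>simp_all add: w_def\<close>)
  hence "Moebius_function 0 w (Moebius_function 0 (-w) u2)
           = Moebius_function 0 w (Moebius_function 0 (-w) u1)" by simp
  thus "u1 = u2" using w u by simp
qed

section \<open>Relative frontiers of injective images of balls\<close>

text \<open>A boundary point \<open>z\<close> cannot be mapped into \<open>f ` ball a r\<close>: the continuous inverse on that open
  set would send \<open>f u \<rightarrow> f z\<close> (for \<open>u \<rightarrow> z\<close> inside the ball) to a limit inside the ball.\<close>
lemma image_sphere_disjoint_image_ball:
  fixes f :: "'a::euclidean_space \<Rightarrow> 'a"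
  assumes cont: "continuous_on (cball a r) f" and inj: "inj_on f (ball a r)"
    and z: "z \<in> sphere a r" and "0 < r"
  shows "f z \<notin> f ` ball a r"
proof
  assume "f z \<in> f ` ball a r"
  then obtain u0 where u0: "u0 \<in> ball a r" "f z = f u0" by auto
  obtain g where hom: "homeomorphism (ball a r) (f ` ball a r) f g"
    using invariance_of_domain_homeomorphism[OF open_ball
        continuous_on_subset[OF cont ball_subset_cball] order_refl inj] by blast
  define F where "F = at z within ball a r"
  have "F \<noteq> bot" using z \<open>0 < r\<close> by (simp add: F_def trivial_limit_within islimpt_ball)
  have in_ball: "\<forall>\<^sub>F u in F. u \<in> ball a r" by (simp add: F_def eventually_at_filter)
  have "z \<in> cball a r" using z sphere_cball by blast
  hence "(f \<longlongrightarrow> f z) (at z within cball a r)" using cont by (simp add: continuous_on_def)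
  hence "(f \<longlongrightarrow> f z) F" unfolding F_def by (rule tendsto_within_subset) (rule ball_subset_cball)
  moreover have "continuous_on (f ` ball a r) g" using hom by (simp add: homeomorphism_def)
  moreover have "\<forall>\<^sub>F u in F. f u \<in> f ` ball a r" using in_ball by (rule eventually_mono) simp
  ultimately have "((\<lambda>u. g (f u)) \<longlongrightarrow> g (f z)) F"
    using u0 by (intro continuous_on_tendsto_compose[of "f ` ball a r" g]) auto
  moreover have "g (f z) = u0" using hom u0 by (simp add: homeomorphism_def)
  moreover have "\<forall>\<^sub>F u in F. g (f u) = u"
    using in_ball by (rule eventually_mono) (use hom in \<open>simp add: homeomorphism_def\<close>)
  ultimately have "((\<lambda>u. u) \<longlongrightarrow> u0) F" using Lim_transform_eventually by fastforce
  moreover have "((\<lambda>u. u) \<longlongrightarrow> z) F" unfolding F_def by (rule tendsto_ident_at)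
  ultimately have "u0 = z" using tendsto_unique[OF \<open>F \<noteq> bot\<close>] by blast
  thus False using u0 z by simp
qed

lemma frontier_of_image_ball:
  fixes f :: "'a::euclidean_space \<Rightarrow> 'a"
  assumes cont: "continuous_on (cball a r) f" and inj: "inj_on f (ball a r)" and "0 < r"
    and "closed S" and sub: "f ` ball a r \<subseteq> S"
  shows "top_of_set S frontier_of (f ` ball a r) = f ` sphere a r"
proof -
  define E where "E = f ` ball a r"
  have "open E"
    unfolding E_def using continuous_on_subset[OF cont ball_subset_cball] inj
    by (intro invariance_of_domain) auto
  hence interior_E: "top_of_set S interior_of E = E"
    using openin_open_Int[of E S] sub by (simp add: E_def interior_of_openin Int_absorb1)
  have closure: "closure E = f ` cball a r"
  proof
    have "closed (f ` cball a r)" by (intro compact_imp_closed compact_continuous_image cont compact_cball)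
    thus "closure E \<subseteq> f ` cball a r" unfolding E_def by (intro closure_minimal) auto
    show "f ` cball a r \<subseteq> closure E"
      using image_closure_subset[OF _ closed_closure closure_subset, of "ball a r" f] cont \<open>0 < r\<close>
      by (simp add: E_def)
  qed
  have "f ` cball a r \<subseteq> S"
    using closure_minimal[OF sub \<open>closed S\<close>] closure by (simp add: E_def)
  hence "top_of_set S closure_of E = f ` cball a r"
    using sub closure by (simp add: E_def closure_of_subtopology Int_absorb1)
  hence "top_of_set S frontier_of E = f ` cball a r - E"
    unfolding frontier_of_def interior_E by simp
  also have "\<dots> = f ` sphere a r"
  proof -
    have "f ` sphere a r \<inter> E = {}"
      unfolding E_def using image_sphere_disjoint_image_ball[OF cont inj _ \<open>0 < r\<close>] by blast
    moreover have "cball a r = ball a r \<union> sphere a r" by auto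
    ultimately show ?thesis unfolding E_def image_Un by blast
  qed
  finally show ?thesis unfolding E_def .
qed

section \<open>The epicycloid and rotational symmetry\<close>

lemma epicycloid_eq_image_sphere: "epicycloid d = elliptic_param d ` sphere 0 1"
proof -
  have "elliptic_param d u = (u ^ d - of_nat d * u) / (of_nat d + 1)" if "norm u = 1" for u
    using that by (simp add: elliptic_param_def algebra_simps)
  hence "epicycloid d = (\<lambda>\<theta>. elliptic_param d (cis \<theta>)) ` {0..2*pi}"
    by (simp add: epicycloid_def Complex.DeMoivre)
  also have "\<dots> = elliptic_param d ` cis ` {0..2*pi}" by (simp add: image_image)
  also have "cis ` {0..2*pi} = sphere 0 1"
  proof
    show "sphere 0 1 \<subseteq> cis ` {0..2*pi}"
    proof
      fix u :: complex assume "u \<in> sphere 0 1"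
      hence "u = cis (Arg2pi u)" using Arg2pi[of u] by (simp add: is_Arg_def cis_conv_exp)
      moreover have "Arg2pi u \<in> {0..2*pi}" using Arg2pi[of u] by simp
      ultimately show "u \<in> cis ` {0..2*pi}" by blast
    qed
  qed auto
  finally show ?thesis .
qed

lemma blaschke_rotate:
  assumes "norm \<omega> = 1"
  shows "blaschke d (\<omega> * w) (\<omega> * z) = \<omega> ^ d * blaschke d w z"
proof -
  have "cnj \<omega> * \<omega> = 1" using assms complex_norm_square[of \<omega>] by (simp add: mult.commute)
  hence "(\<omega> * z - \<omega> * w) / (1 - cnj (\<omega> * w) * (\<omega> * z)) = \<omega> * ((z - w) / (1 - cnj w * z))"
    by (simp add: algebra_simps)
  thus ?thesis unfolding blaschke_def by (simp only: power_mult_distrib)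
qed

lemma fixed_point_locus_rotate:
  assumes "d \<ge> 2" "\<omega> ^ (d - 1) = 1" "w \<in> fixed_point_locus d"
  shows "\<omega> * w \<in> fixed_point_locus d"
proof -
  have "norm \<omega> = 1" using power_eq_1_iff[OF assms(2)] assms(1) by auto
  have "\<omega> ^ d = \<omega>" using assms(1,2) by (metis Suc_diff_1 less_le_trans pos2 power_Suc mult_1_right)
  obtain z where "norm w < 1" "norm z < 1" "blaschke d w z = z"
    using assms(3) unfolding fixed_point_locus_def by auto
  hence "norm (\<omega> * w) < 1" "norm (\<omega> * z) < 1" "blaschke d (\<omega> * w) (\<omega> * z) = \<omega> * z"
    using blaschke_rotate[OF \<open>norm \<omega> = 1\<close>] \<open>\<omega> ^ d = \<omega>\<close> \<open>norm \<omega> = 1\<close> by (simp_all add: norm_mult)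
  thus ?thesis unfolding fixed_point_locus_def by auto
qed

lemma ellip_set_eq_sector_Int:
  assumes "d \<ge> 2"
  shows "ellip_set d = sector d \<inter> fixed_point_locus d"
proof -
  have "elliptic (blaschke d w) \<longleftrightarrow> (\<exists>z\<in>ball 0 1. blaschke d w z = z)" if "norm w < 1" for w
    using assms that by (intro elliptic_iff_interior_fixed_point holomorphic_on_blaschke
        blaschke_maps_ball blaschke_not_inj_on) auto
  thus ?thesis unfolding ellip_set_def sector_def fixed_point_locus_def by auto
qed

text \<open>The rotation index is \<open>j = \<lfloor>arg w / (2 pi / (d - 1))\<rfloor>\<close>.\<close>
lemma ex_rotation_into_sector:
  assumes "d \<ge> 2" "w \<in> ball 0 1"
  shows "\<exists>j\<in>{0..d-2}. \<exists>v\<in>sector d. w = cis (2 * pi * real j / (real d - 1)) * v"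
proof -
  define s where "s = 2 * pi / (real d - 1)"
  have "real d - 1 > 0" "s > 0" using assms(1) by (simp_all add: s_def)
  define t where "t = Arg2pi w"
  have t: "0 \<le> t" "t < 2 * pi" "w = of_real (norm w) * cis t"
    using Arg2pi[of w] by (auto simp: t_def is_Arg_def cis_conv_exp)
  define j where "j = nat \<lfloor>t / s\<rfloor>"
  have j: "real j * s \<le> t" "t < (real j + 1) * s"
    using \<open>s > 0\<close> t(1) floor_divide_lower[of s t] floor_divide_upper[of s t] by (auto simp: j_def)
  have "t / s < real d - 1"
    using mult_strict_right_mono[OF t(2) \<open>real d - 1 > 0\<close>] \<open>real d - 1 > 0\<close>
    by (simp add: s_def field_simps)
  hence "\<lfloor>t / s\<rfloor> < int d - 1" by (simp add: floor_less_iff)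
  hence "j \<le> d - 2" using assms(1) by (auto simp: j_def nat_le_iff)
  define v where "v = of_real (norm w) * cis (t - real j * s)"
  have "0 \<le> t - real j * s" "t - real j * s < s" using j by (auto simp: algebra_simps)
  moreover have "v \<in> ball 0 1" "v = of_real (norm v) * cis (t - real j * s)"
    using assms(2) by (simp_all add: v_def norm_mult)
  ultimately have "v \<in> sector d" unfolding sector_def s_def[symmetric] by blast
  moreover have "w = cis (2 * pi * real j / (real d - 1)) * v"
    unfolding v_def by (subst t(3)) (simp add: cis_mult s_def)
  ultimately show ?thesis using \<open>j \<le> d - 2\<close> by (intro bexI[of _ j] bexI[of _ v]) auto
qed

lemma ellip_tilde_eq_fixed_point_locus:
  assumes "d \<ge> 2"
  shows "ellip_tilde d = fixed_point_locus d"
proof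
  have root: "cis (2 * pi * x / (real d - 1)) ^ (d - 1) = 1" if "x \<in> \<int>" for x
  proof -
    have "cis (2 * pi * x / (real d - 1)) ^ (d - 1) = cis (real (d - 1) * (2 * pi * x / (real d - 1)))"
      by (rule Complex.DeMoivre)
    also have "real (d - 1) * (2 * pi * x / (real d - 1)) = 2 * pi * x"
      using assms by simp
    finally show ?thesis using that by simp
  qed
  show "ellip_tilde d \<subseteq> fixed_point_locus d"
    using root fixed_point_locus_rotate[OF assms] ellip_set_eq_sector_Int[OF assms]
    unfolding ellip_tilde_def by auto
  show "fixed_point_locus d \<subseteq> ellip_tilde d"
  proof
    fix w assume w: "w \<in> fixed_point_locus d"
    then obtain j v where j: "j \<in> {0..d-2}" and v: "v \<in> sector d"
      and w_eq: "w = cis (2 * pi * real j / (real d - 1)) * v"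
      using ex_rotation_into_sector[OF assms] unfolding fixed_point_locus_def by blast
    have "cis (2 * pi * (- real j) / (real d - 1)) = cis (- (2 * pi * real j / (real d - 1)))"
      by simp
    hence "cis (2 * pi * (- real j) / (real d - 1)) * w = v"
      unfolding w_eq by (simp add: mult.assoc[symmetric] cis_mult)
    moreover have "(- real j) \<in> \<int>" by simp
    ultimately have "v \<in> fixed_point_locus d"
      using fixed_point_locus_rotate[OF assms root w] by metis
    thus "w \<in> ellip_tilde d"
      using j v w_eq ellip_set_eq_sector_Int[OF assms] unfolding ellip_tilde_def by blast
  qed
qed

theorem theorem2p1:
  fixes d :: nat
  assumes "d \<ge> 2"
  shows "(top_of_set (cball (0::complex) 1)) frontier_of (ellip_tilde d) = epicycloid d"
proof -
  have "elliptic_param d ` ball 0 1 \<subseteq> cball 0 1"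
    using norm_elliptic_param_less_1 assms by (force simp: less_imp_le)
  hence "top_of_set (cball 0 1) frontier_of (elliptic_param d ` ball 0 1)
           = elliptic_param d ` sphere 0 1"
    using assms by (intro frontier_of_image_ball continuous_on_elliptic_param inj_on_elliptic_param) auto
  thus ?thesis
    using assms by (simp add: ellip_tilde_eq_fixed_point_locus fixed_point_locus_eq_image
        epicycloid_eq_image_sphere)
qed

end
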